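(* Consider the shard-based blockchain game with uniform (equal) reward sharing described in the context, and assume $\tau < n$. Then the strategy profile in which every one of the $N$ processors plays Cooperate ($C$), called All-C, is not a Nash equilibrium.
   Context: There are $N$ processors partitioned into $k$ shards (committees), each containing $n = N/k$ processors. In a given epoch each processor $P_i$ in shard $j$ holds a finite set (vector) $x_i^j$ of transactions to verify. Fixed parameters: mandatory cost $c^m>0$ (already paid by every processor), fixed optional cost $c^f>0$, per-transaction verification cost $c^v>0$, per-transaction fee reward $r>0$, block reward $BR>0$, and a consensus threshold $\tau$, an integer with $1\le \tau\le n$. Each processor simultaneously chooses a strategy in $\{C, D\}$ (Cooperate or Defect). Let $l_j$ be the number of cooperating processors in shard $j$. Shard $j$ reaches consensus iff $l_j\ge\tau$, in which case it outputs a fixed nonempty set $y^j$ of transactions; a new block is appended iff every shard reaches consensus. Uniform reward sharing: if the block is appended, each processor receives $S=\frac{BR + r\sum_{j=1}^k |y^j|}{N}$, otherwise $S=0$. The payoff of a cooperating processor $P_i$ in shard $j$ is $S-(c^m+c^f+|x_i^j|c^v)$, and that of a defecting processor is $S-c^m$. A Nash equilibrium is a strategy profile in which no processor can strictly increase its payoff by unilaterally changing its strategy. *)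

theory Defs
  imports Complex_Main
begin

text \<open>Processors are indexed by pairs (j, i) with shard index j < k and
  position i < n inside the shard; N = k * n.
  A strategy profile is s :: nat \<Rightarrow> nat \<Rightarrow> bool, where s j i = True means
  processor i of shard j plays Cooperate (C) and False means Defect (D).\<close>

definition num_coop :: "nat \<Rightarrow> (nat \<Rightarrow> nat \<Rightarrow> bool) \<Rightarrow> nat \<Rightarrow> nat" where
  "num_coop n s j = card {i. i < n \<and> s j i}"

definition block_appended ::
  "nat \<Rightarrow> nat \<Rightarrow> nat \<Rightarrow> (nat \<Rightarrow> nat \<Rightarrow> bool) \<Rightarrow> bool" where
  "block_appended k n \<tau> s \<longleftrightarrow> (\<forall>j<k. num_coop n s j \<ge> \<tau>)"

definition share ::
  "nat \<Rightarrow> nat \<Rightarrow> nat \<Rightarrow> real \<Rightarrow> real \<Rightarrow> (nat \<Rightarrow> 'a set) \<Rightarrow> (nat \<Rightarrow> nat \<Rightarrow> bool) \<Rightarrow> real" where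
  "share k n \<tau> BR r y s =
     (if block_appended k n \<tau> s
      then (BR + r * (\<Sum>j<k. real (card (y j)))) / real (k * n)
      else 0)"

definition payoff ::
  "nat \<Rightarrow> nat \<Rightarrow> nat \<Rightarrow> real \<Rightarrow> real \<Rightarrow> real \<Rightarrow> real \<Rightarrow> real \<Rightarrow>
   (nat \<Rightarrow> nat \<Rightarrow> 'a set) \<Rightarrow> (nat \<Rightarrow> 'a set) \<Rightarrow> (nat \<Rightarrow> nat \<Rightarrow> bool) \<Rightarrow> nat \<Rightarrow> nat \<Rightarrow> real" where
  "payoff k n \<tau> cm cf cv r BR x y s j i =
     (if s j i
      then share k n \<tau> BR r y s - (cm + cf + real (card (x j i)) * cv)
      else share k n \<tau> BR r y s - cm)"

definition is_nash ::
  "nat \<Rightarrow> nat \<Rightarrow> nat \<Rightarrow> real \<Rightarrow> real \<Rightarrow> real \<Rightarrow> real \<Rightarrow> real \<Rightarrow>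
   (nat \<Rightarrow> nat \<Rightarrow> 'a set) \<Rightarrow> (nat \<Rightarrow> 'a set) \<Rightarrow> (nat \<Rightarrow> nat \<Rightarrow> bool) \<Rightarrow> bool" where
  "is_nash k n \<tau> cm cf cv r BR x y s \<longleftrightarrow>
     (\<forall>j<k. \<forall>i<n. \<forall>a::bool.
        payoff k n \<tau> cm cf cv r BR x y (s(j := (s j)(i := a))) j i
          \<le> payoff k n \<tau> cm cf cv r BR x y s j i)"

end

theory Submission
  imports Defs
begin

text \<open>If every shard has strictly more than \<open>\<tau>\<close> cooperators, a single cooperator can
  defect without preventing the block from being appended, so the uniform share it
  receives is unchanged while it saves the optional cost \<open>c\<^sup>f + |x| c\<^sup>v > 0\<close>.
  Under All-C each shard has \<open>n > \<tau>\<close> cooperators.\<close>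

lemma num_coop_all_cooperate: "num_coop n (\<lambda>j i. True) j = n"
  by (simp add: num_coop_def)

lemma num_coop_defect_ge:
  "num_coop n s j - 1 \<le> num_coop n (s(j := (s j)(i := False))) j"
proof -
  have "{i'. i' < n \<and> (s(j := (s j)(i := False))) j i'} = {i'. i' < n \<and> s j i'} - {i}"
    by auto
  then show ?thesis
    unfolding num_coop_def by (simp add: card_Diff_singleton_if)
qed

lemma block_appended_defect:
  assumes "\<forall>j'<k. \<tau> < num_coop n s j'"
  shows "block_appended k n \<tau> (s(j := (s j)(i := False)))"
  unfolding block_appended_def
proof (intro allI impI)
  fix j' assume "j' < k"
  then have more: "\<tau> < num_coop n s j'"
    using assms by blast
  show "\<tau> \<le> num_coop n (s(j := (s j)(i := False))) j'"
  proof (cases "j' = j")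
    case True
    then show ?thesis
      using more num_coop_defect_ge[of n s j i] by simp
  next
    case False
    then have "num_coop n (s(j := (s j)(i := False))) j' = num_coop n s j'"
      by (simp add: num_coop_def)
    then show ?thesis
      using more by simp
  qed
qed

lemma share_eq_if_block_appended:
  assumes "block_appended k n \<tau> s" and "block_appended k n \<tau> s'"
  shows "share k n \<tau> BR r y s' = share k n \<tau> BR r y s"
  using assms by (simp add: share_def)

lemma payoff_defect_gt:
  assumes "s j i" and "cf > 0" and "cv \<ge> 0"
    and "block_appended k n \<tau> s" and "block_appended k n \<tau> (s(j := (s j)(i := False)))"
  shows "payoff k n \<tau> cm cf cv r BR x y s j i
           < payoff k n \<tau> cm cf cv r BR x y (s(j := (s j)(i := False))) j i"
proof -
  have "real (card (x j i)) * cv \<ge> 0"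
    using assms(3) by simp
  moreover have "share k n \<tau> BR r y (s(j := (s j)(i := False))) = share k n \<tau> BR r y s"
    using assms(4,5) by (rule share_eq_if_block_appended)
  ultimately show ?thesis
    using assms(1,2) by (simp add: payoff_def)
qed

lemma not_is_nash_if_profitable_deviation:
  assumes "j < k" and "i < n"
    and "payoff k n \<tau> cm cf cv r BR x y s j i
           < payoff k n \<tau> cm cf cv r BR x y (s(j := (s j)(i := a))) j i"
  shows "\<not> is_nash k n \<tau> cm cf cv r BR x y s"
  using assms unfolding is_nash_def by (meson not_le)

theorem theorem2:
  fixes k n \<tau> :: nat
    and cm cf cv r BR :: real
    and x :: "nat \<Rightarrow> nat \<Rightarrow> 'a set"
    and y :: "nat \<Rightarrow> 'a set"
  assumes "k \<ge> 1" and "n \<ge> 1"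
    and "cm > 0" and "cf > 0" and "cv > 0" and "r > 0" and "BR > 0"
    and "1 \<le> \<tau>" and "\<tau> \<le> n"
    and "\<forall>j<k. \<forall>i<n. finite (x j i)"
    and "\<forall>j<k. finite (y j) \<and> y j \<noteq> {}"
    and "\<tau> < n"
  shows "\<not> is_nash k n \<tau> cm cf cv r BR x y (\<lambda>j i. True)"
proof -
  let ?allC = "\<lambda>j i. True"
  have surplus: "\<forall>j<k. \<tau> < num_coop n ?allC j"
    using \<open>\<tau> < n\<close> by (simp add: num_coop_all_cooperate)
  then have "block_appended k n \<tau> ?allC"
    by (simp add: block_appended_def less_imp_le)
  moreover have "block_appended k n \<tau> (?allC(0 := (?allC 0)(0 := False)))"
    using surplus by (rule block_appended_defect)
  ultimately have "payoff k n \<tau> cm cf cv r BR x y ?allC 0 0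
      < payoff k n \<tau> cm cf cv r BR x y (?allC(0 := (?allC 0)(0 := False))) 0 0"
    using \<open>cf > 0\<close> \<open>cv > 0\<close> by (intro payoff_defect_gt) simp_all
  then show ?thesis
    using \<open>k \<ge> 1\<close> \<open>n \<ge> 1\<close> by (intro not_is_nash_if_profitable_deviation) auto
qed

end
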